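(* Let $d\ge2$. Then for every $G\in C^2(\mathbb{R})$ there is a separately convex function $F:\mathbb{R}^d\to\mathbb{R}$ such that $F(t,t,\dots,t)=G(t)$ for each $t\in\mathbb{R}$.
   Context: A function $F:\mathbb{R}^d\to\mathbb{R}$ is called separately convex if it is convex on every line parallel to a coordinate axis. *)

theory Defs
  imports "HOL-Analysis.Analysis"
begin

definition separately_convex :: "(real ^ 'n \<Rightarrow> real) \<Rightarrow> bool" where
  "separately_convex F \<longleftrightarrow>
     (\<forall>x i. convex_on UNIV (\<lambda>s::real. F (\<chi> j. if j = i then s else x $ j)))"

definition C2_real :: "(real \<Rightarrow> real) \<Rightarrow> bool" where
  "C2_real G \<longleftrightarrow>
     (\<exists>G' G''. (\<forall>t. (G has_real_derivative G' t) (at t)) \<and>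
               (\<forall>t. (G' has_real_derivative G'' t) (at t)) \<and>
               continuous_on UNIV G'')"

end

theory Submission
  imports Defs
begin

text \<open>
  Only two coordinates are used. Put
  \<open>\<Phi>(a, b) = G(m) + [P(2a - b) + P(2b - a) - 2 P(m)]\<close> with \<open>m = (a + b)/2\<close>, where \<open>P'' = \<rho>\<close>
  for a continuous \<open>\<rho> \<ge> |G''|\<close> that is nondecreasing in \<open>|t|\<close>. The bracket vanishes on the
  diagonal, so \<open>\<Phi>(t, t) = G(t)\<close>. Its second \<open>a\<close>-derivative is
  \<open>G''(m)/4 - \<rho>(m)/2 + 4 \<rho>(2a - b) + \<rho>(2b - a)\<close>, which is nonnegative because \<open>m\<close> is the
  midpoint of \<open>2a - b\<close> and \<open>2b - a\<close>, so that \<open>\<rho>(m)\<close> is at most the larger of the last two values.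
  By symmetry \<open>\<Phi>\<close> is convex in \<open>b\<close> as well.
\<close>

lemma continuous_has_antiderivative:
  fixes g :: "real \<Rightarrow> real"
  assumes "continuous_on UNIV g"
  obtains Q where "\<And>x. (Q has_real_derivative g x) (at x)"
proof -
  have "\<exists>Q. \<forall>x::real. -\<infinity> < ereal x \<longrightarrow> ereal x < \<infinity> \<longrightarrow> (Q has_vector_derivative g x) (at x)"
    by (rule einterval_antiderivative) (use assms in \<open>auto simp: continuous_on_eq_continuous_at\<close>)
  then show ?thesis
    using that by (auto simp: has_real_derivative_iff_has_vector_derivative)
qed

lemma DERIV_compose_UNIV:
  assumes "\<And>t. (f has_real_derivative f' t) (at t)" and "(g has_real_derivative g') (at s)"
  shows "((\<lambda>s. f (g s)) has_real_derivative f' (g s) * g') (at s)"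
  using DERIV_chain2[OF assms] .

context
  fixes h :: "real \<Rightarrow> real" and a :: real
  assumes continuous_h: "continuous_on {a..} h"
begin

lemma bdd_above_image_Icc: "bdd_above (h ` {a..t})"
proof -
  have "compact (h ` {a..t})"
    by (intro compact_continuous_image continuous_on_subset[OF continuous_h]) auto
  then show ?thesis by (simp add: bounded_imp_bdd_above compact_imp_bounded)
qed

lemma running_Sup_upper: "a \<le> s \<Longrightarrow> s \<le> t \<Longrightarrow> h s \<le> Sup (h ` {a..t})"
  by (intro cSup_upper bdd_above_image_Icc) auto

lemma running_Sup_least: "a \<le> t \<Longrightarrow> (\<And>s. a \<le> s \<Longrightarrow> s \<le> t \<Longrightarrow> h s \<le> c) \<Longrightarrow> Sup (h ` {a..t}) \<le> c"
  by (intro cSup_least) auto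

lemma running_Sup_mono: "a \<le> s \<Longrightarrow> s \<le> t \<Longrightarrow> Sup (h ` {a..s}) \<le> Sup (h ` {a..t})"
  by (rule running_Sup_least) (auto intro: running_Sup_upper)

lemma running_Sup_le_add:
  assumes "a \<le> s" "s \<le> t" and "\<And>r. s \<le> r \<Longrightarrow> r \<le> t \<Longrightarrow> h r \<le> h s + e"
  shows "Sup (h ` {a..t}) \<le> Sup (h ` {a..s}) + e"
proof (rule running_Sup_least)
  fix r assume "a \<le> r" "r \<le> t"
  show "h r \<le> Sup (h ` {a..s}) + e"
  proof (cases "r \<le> s")
    case True
    with \<open>a \<le> r\<close> have "h r \<le> Sup (h ` {a..s})" by (rule running_Sup_upper)
    moreover have "h s \<le> h s + e" using assms(3)[of s] \<open>s \<le> t\<close> by simp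
    ultimately show ?thesis by simp
  next
    case False
    then have "h r \<le> h s + e" using assms(3) \<open>r \<le> t\<close> by simp
    with running_Sup_upper[OF \<open>a \<le> s\<close> order_refl] show ?thesis by simp
  qed
qed (use assms in simp)

lemma continuous_on_running_Sup: "continuous_on {a..} (\<lambda>t. Sup (h ` {a..t}))"
  unfolding continuous_on_iff
proof (intro ballI allI impI)
  fix t0 e :: real assume t0: "t0 \<in> {a..}" and "0 < e"
  then obtain d where "d > 0" and d: "\<And>r. r \<in> {a..} \<Longrightarrow> dist r t0 < d \<Longrightarrow> \<bar>h r - h t0\<bar> < e/3"
    using continuous_h unfolding continuous_on_iff dist_real_def
    by (metis zero_less_divide_iff zero_less_numeral)
  have close: "h r \<le> h s + 2*e/3"
    if "a \<le> r" "a \<le> s" "dist r t0 < d" "dist s t0 < d" for r s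
  proof -
    have "\<bar>h r - h t0\<bar> < e/3" "\<bar>h s - h t0\<bar> < e/3" using d that by auto
    then show ?thesis by linarith
  qed
  show "\<exists>d>0. \<forall>t\<in>{a..}. dist t t0 < d \<longrightarrow> dist (Sup (h ` {a..t})) (Sup (h ` {a..t0})) < e"
  proof (intro exI[of _ d] conjI ballI impI \<open>d > 0\<close>)
    fix t assume t: "t \<in> {a..}" and "dist t t0 < d"
    have "\<bar>Sup (h ` {a..t}) - Sup (h ` {a..t0})\<bar> \<le> 2*e/3"
    proof (cases "t0 \<le> t")
      case True
      have "Sup (h ` {a..t}) \<le> Sup (h ` {a..t0}) + 2*e/3"
        using t0 True \<open>dist t t0 < d\<close> \<open>d > 0\<close>
        by (intro running_Sup_le_add close) (auto simp: dist_real_def)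
      then show ?thesis using running_Sup_mono[of t0 t] t0 True by simp
    next
      case False
      have "Sup (h ` {a..t0}) \<le> Sup (h ` {a..t}) + 2*e/3"
        using t False \<open>dist t t0 < d\<close>
        by (intro running_Sup_le_add close) (auto simp: dist_real_def)
      then show ?thesis using running_Sup_mono[of t t0] t False by simp
    qed
    then show "dist (Sup (h ` {a..t})) (Sup (h ` {a..t0})) < e"
      using \<open>0 < e\<close> by (simp add: dist_real_def)
  qed
qed

end

lemma continuous_radial_majorant:
  fixes g :: "real \<Rightarrow> real"
  assumes "continuous_on UNIV g"
  obtains \<rho> where "continuous_on UNIV \<rho>" and "\<And>t. \<bar>g t\<bar> \<le> \<rho> t"
    and "\<And>s t. \<bar>s\<bar> \<le> \<bar>t\<bar> \<Longrightarrow> \<rho> s \<le> \<rho> t"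
proof
  define h where "h s = \<bar>g s\<bar> + \<bar>g (- s)\<bar>" for s
  have "continuous_on UNIV h"
    unfolding h_def by (intro continuous_intros continuous_on_compose2[OF assms]) auto
  then have h: "continuous_on {0..} h" by (rule continuous_on_subset) simp
  show "continuous_on UNIV (\<lambda>t. Sup (h ` {0..\<bar>t\<bar>}))"
    by (rule continuous_on_compose2[OF continuous_on_running_Sup[OF h]])
      (auto intro: continuous_intros)
  show "\<bar>g t\<bar> \<le> Sup (h ` {0..\<bar>t\<bar>})" for t
  proof -
    have "\<bar>g t\<bar> \<le> h \<bar>t\<bar>" unfolding h_def by (cases "t \<ge> 0") auto
    also have "\<dots> \<le> Sup (h ` {0..\<bar>t\<bar>})" by (rule running_Sup_upper[OF h]) auto
    finally show ?thesis .
  qed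
  show "Sup (h ` {0..\<bar>s\<bar>}) \<le> Sup (h ` {0..\<bar>t\<bar>})" if "\<bar>s\<bar> \<le> \<bar>t\<bar>" for s t
    using that by (intro running_Sup_mono[OF h]) auto
qed

lemma radial_mono_midpoint_le_max:
  fixes \<rho> :: "real \<Rightarrow> real"
  assumes "\<And>s t. \<bar>s\<bar> \<le> \<bar>t\<bar> \<Longrightarrow> \<rho> s \<le> \<rho> t"
  shows "\<rho> ((u + v) / 2) \<le> max (\<rho> u) (\<rho> v)"
proof -
  have "\<bar>(u + v) / 2\<bar> \<le> (\<bar>u\<bar> + \<bar>v\<bar>) / 2"
    using abs_triangle_ineq[of u v] by simp
  then have "\<bar>(u + v) / 2\<bar> \<le> \<bar>u\<bar> \<or> \<bar>(u + v) / 2\<bar> \<le> \<bar>v\<bar>"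
    by argo
  then show ?thesis using assms by (meson max.coboundedI1 max.coboundedI2)
qed

definition diagonal_extension :: "(real \<Rightarrow> real) \<Rightarrow> (real \<Rightarrow> real) \<Rightarrow> real \<Rightarrow> real \<Rightarrow> real" where
  "diagonal_extension G P a b = G ((a + b) / 2) - 2 * P ((a + b) / 2) + P (2 * a - b) + P (2 * b - a)"

lemma diagonal_extension_diagonal [simp]: "diagonal_extension G P t t = G t"
  by (simp add: diagonal_extension_def)

lemma diagonal_extension_commute: "diagonal_extension G P a b = diagonal_extension G P b a"
  by (simp add: diagonal_extension_def add.commute)

lemma has_real_derivative_diagonal_extension:
  assumes "\<And>t. (G has_real_derivative G' t) (at t)" and "\<And>t. (P has_real_derivative P' t) (at t)"
  shows "((\<lambda>a. diagonal_extension G P a b) has_real_derivative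
      G' ((a + b) / 2) / 2 - P' ((a + b) / 2) + 2 * P' (2 * a - b) - P' (2 * b - a)) (at a)"
  unfolding diagonal_extension_def
  by (rule derivative_eq_intros DERIV_compose_UNIV[OF assms(1)] DERIV_compose_UNIV[OF assms(2)]
      | rule refl | simp add: field_simps)+

lemma convex_on_diagonal_extension:
  assumes dG: "\<And>t. (G has_real_derivative G' t) (at t)"
    and dG': "\<And>t. (G' has_real_derivative G'' t) (at t)"
    and dP: "\<And>t. (P has_real_derivative P' t) (at t)"
    and dP': "\<And>t. (P' has_real_derivative \<rho> t) (at t)"
    and majorant: "\<And>t. \<bar>G'' t\<bar> \<le> \<rho> t"
    and radial_mono: "\<And>s t. \<bar>s\<bar> \<le> \<bar>t\<bar> \<Longrightarrow> \<rho> s \<le> \<rho> t"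
  shows "convex_on UNIV (\<lambda>a. diagonal_extension G P a b)"
proof (rule f''_ge0_imp_convex)
  let ?f' = "\<lambda>a. G' ((a + b) / 2) / 2 - P' ((a + b) / 2) + 2 * P' (2 * a - b) - P' (2 * b - a)"
  show "((\<lambda>a. diagonal_extension G P a b) has_real_derivative ?f' a) (at a)" for a
    by (rule has_real_derivative_diagonal_extension[OF dG dP])
  show "(?f' has_real_derivative
      G'' ((a + b) / 2) / 4 - \<rho> ((a + b) / 2) / 2 + 4 * \<rho> (2 * a - b) + \<rho> (2 * b - a)) (at a)" for a
    by (rule derivative_eq_intros DERIV_compose_UNIV[OF dG'] DERIV_compose_UNIV[OF dP']
        | rule refl | simp add: field_simps)+
  show "0 \<le> G'' ((a + b) / 2) / 4 - \<rho> ((a + b) / 2) / 2 + 4 * \<rho> (2 * a - b) + \<rho> (2 * b - a)" for a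
  proof -
    have "\<rho> (((2 * a - b) + (2 * b - a)) / 2) \<le> max (\<rho> (2 * a - b)) (\<rho> (2 * b - a))"
      by (rule radial_mono_midpoint_le_max[of \<rho>]) (rule radial_mono)
    then have "\<rho> ((a + b) / 2) \<le> max (\<rho> (2 * a - b)) (\<rho> (2 * b - a))"
      by (simp add: add.commute)
    moreover have "0 \<le> \<rho> (2 * a - b)" "0 \<le> \<rho> (2 * b - a)"
      using majorant[of "2 * a - b"] majorant[of "2 * b - a"] by linarith+
    ultimately have "\<rho> ((a + b) / 2) \<le> \<rho> (2 * a - b) + \<rho> (2 * b - a)"
      by (simp add: max_def split: if_splits)
    moreover have "- \<rho> ((a + b) / 2) \<le> G'' ((a + b) / 2)"
      using majorant[of "(a + b) / 2"] by linarith
    ultimately show ?thesis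
      using \<open>0 \<le> \<rho> (2 * a - b)\<close> \<open>0 \<le> \<rho> (2 * b - a)\<close> by linarith
  qed
qed simp

lemma separately_convex_two_coordinates:
  fixes \<Phi> :: "real \<Rightarrow> real \<Rightarrow> real" and i k :: "'n::finite"
  assumes "i \<noteq> k" and convex_fst: "\<And>b. convex_on UNIV (\<lambda>a. \<Phi> a b)"
    and convex_snd: "\<And>a. convex_on UNIV (\<Phi> a)"
  shows "separately_convex (\<lambda>x :: real ^ 'n. \<Phi> (x $ i) (x $ k))"
  unfolding separately_convex_def
proof (intro allI)
  fix x :: "real ^ 'n" and j
  consider "j = i" | "j = k" | "j \<noteq> i" "j \<noteq> k" by blast
  then show "convex_on UNIV (\<lambda>s. \<Phi> ((\<chi> l. if l = j then s else x $ l) $ i) ((\<chi> l. if l = j then s else x $ l) $ k))"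
  proof cases
    case 1
    then show ?thesis using \<open>i \<noteq> k\<close> convex_fst[of "x $ k"] by simp
  next
    case 2
    then show ?thesis using \<open>i \<noteq> k\<close> convex_snd[of "x $ i"] by simp
  qed (simp add: convex_on_const)
qed

theorem lemma2p1:
  fixes G :: "real \<Rightarrow> real"
  assumes "CARD('n::finite) \<ge> 2"
    and "C2_real G"
  shows "\<exists>F :: real ^ 'n \<Rightarrow> real. separately_convex F \<and> (\<forall>t. F (\<chi> j. t) = G t)"
proof -
  obtain G' G'' where dG: "\<And>t. (G has_real_derivative G' t) (at t)"
    and dG': "\<And>t. (G' has_real_derivative G'' t) (at t)" and "continuous_on UNIV G''"
    using assms(2) unfolding C2_real_def by blast
  obtain \<rho> where "continuous_on UNIV \<rho>" and majorant: "\<And>t. \<bar>G'' t\<bar> \<le> \<rho> t"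
    and radial_mono: "\<And>s t. \<bar>s\<bar> \<le> \<bar>t\<bar> \<Longrightarrow> \<rho> s \<le> \<rho> t"
    using continuous_radial_majorant[OF \<open>continuous_on UNIV G''\<close>] by blast
  obtain P' where dP': "\<And>t. (P' has_real_derivative \<rho> t) (at t)"
    using continuous_has_antiderivative[OF \<open>continuous_on UNIV \<rho>\<close>] by blast
  then have "continuous_on UNIV P'"
    by (meson DERIV_isCont continuous_at_imp_continuous_on)
  then obtain P where dP: "\<And>t. (P has_real_derivative P' t) (at t)"
    using continuous_has_antiderivative by blast
  have "\<not> CARD('n) \<le> Suc 0"
    using assms(1) by simp
  then obtain i k :: 'n where "i \<noteq> k"
    by (auto simp: card_le_Suc0_iff_eq)
  have convex_fst: "convex_on UNIV (\<lambda>a. diagonal_extension G P a b)" for b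
    by (rule convex_on_diagonal_extension[OF dG dG' dP dP' majorant radial_mono])
  have convex_snd: "convex_on UNIV (diagonal_extension G P a)" for a
    using convex_fst[of a] by (simp only: diagonal_extension_commute[of G P _ a])
  have "separately_convex (\<lambda>x :: real ^ 'n. diagonal_extension G P (x $ i) (x $ k))"
    using \<open>i \<noteq> k\<close> convex_fst convex_snd by (rule separately_convex_two_coordinates)
  then show ?thesis by (intro exI[of _ "\<lambda>x. diagonal_extension G P (x $ i) (x $ k)"]) simp
qed

end
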